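(* Let $X$ be a set and $\sqsubseteq$ a binary relation on pairs of finite subsets of $X$ satisfying ($\iota_0$)–($\iota_4$). For finite $a\subseteq X$ define $$\mathrm{conv}_{\mathcal L}(a)=\{p\in X:\{p\}\sqsubseteq a\},\qquad \mathrm{conv}_{\mathcal U}(a)=\{p\in X: a\sqsubseteq\{p\}\},$$ and let $\mathcal L$ (resp. $\mathcal U$) be the family of all $A\subseteq X$ such that $\mathrm{conv}_{\mathcal L}(a)\subseteq A$ (resp. $\mathrm{conv}_{\mathcal U}(a)\subseteq A$) for every finite $a\subseteq A$. Then $(X,\mathcal L,\mathcal U)$ is a normal bi-convexity space satisfying, for all finite $a,b\subseteq X$, $$a\sqsubseteq b\iff \mathrm{conv}_{\mathcal U}(a)\cap\mathrm{conv}_{\mathcal L}(b)\neq\emptyset.$$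
   Context: Axioms for a relation $\sqsubseteq$ on pairs of finite subsets of $X$ ($a,b,a',b',a_i,b_i$ finite, $p,q\in X$): ($\iota_0$) $\emptyset\not\sqsubseteq\emptyset$; ($\iota_1$) $a\sqsubseteq b$, $a\subseteq a'$, $b\subseteq b'$ imply $a'\sqsubseteq b'$; ($\iota_2$) $\{p\}\sqsubseteq\{q\}$ and $\{q\}\sqsubseteq\{p\}$ hold iff $p=q$; ($\iota_3$) $(a_0\cup\{p\})\sqsubseteq b_0$ and $a_1\sqsubseteq(b_1\cup\{p\})$ imply $(a_0\cup a_1)\sqsubseteq(b_0\cup b_1)$; ($\iota_4$) if $a\sqsubseteq b$ then there is $p\in X$ with $a\sqsubseteq\{p\}$ and $\{p\}\sqsubseteq b$. A convexity on $X$ is a family of subsets of $X$ closed under arbitrary intersections (so $X$ belongs to it) and unions of chains; $\mathrm{conv}(A)$ is the intersection of all convex sets containing $A$. A bi-convexity space $(X,\mathcal L,\mathcal U)$ consists of two convexities on $X$. It is normal if (N1) for all $x\neq y$ in $X$, either $\mathrm{conv}_{\mathcal L}\{x\}\cap\mathrm{conv}_{\mathcal U}\{y\}=\emptyset$ or $\mathrm{conv}_{\mathcal U}\{x\}\cap\mathrm{conv}_{\mathcal L}\{y\}=\emptyset$; and (N2) for all disjoint $A\in\mathcal L$, $B\in\mathcal U$ there is $H\in\mathcal U$ with $X\setminus H\in\mathcal L$, $B\subseteq H$ and $A\cap H=\emptyset$. *)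

theory Defs
  imports Main
begin

definition convexity :: "'a set \<Rightarrow> 'a set set \<Rightarrow> bool" where
  "convexity X C \<longleftrightarrow> C \<subseteq> Pow X \<and> X \<in> C
     \<and> (\<forall>F. F \<subseteq> C \<and> F \<noteq> {} \<longrightarrow> \<Inter>F \<in> C)
     \<and> (\<forall>F. F \<subseteq> C \<and> F \<noteq> {} \<and> Complete_Partial_Order.chain (\<subseteq>) F \<longrightarrow> \<Union>F \<in> C)"

definition conv_hull :: "'a set \<Rightarrow> 'a set set \<Rightarrow> 'a set \<Rightarrow> 'a set" where
  "conv_hull X C A = X \<inter> \<Inter>{K \<in> C. A \<subseteq> K}"

definition biconvexity_space :: "'a set \<Rightarrow> 'a set set \<Rightarrow> 'a set set \<Rightarrow> bool" where
  "biconvexity_space X L U \<longleftrightarrow> convexity X L \<and> convexity X U"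

definition normal_biconvexity :: "'a set \<Rightarrow> 'a set set \<Rightarrow> 'a set set \<Rightarrow> bool" where
  "normal_biconvexity X L U \<longleftrightarrow> biconvexity_space X L U
     \<and> (\<forall>x\<in>X. \<forall>y\<in>X. x \<noteq> y \<longrightarrow>
          conv_hull X L {x} \<inter> conv_hull X U {y} = {}
        \<or> conv_hull X U {x} \<inter> conv_hull X L {y} = {})
     \<and> (\<forall>A\<in>L. \<forall>B\<in>U. A \<inter> B = {} \<longrightarrow>
          (\<exists>H\<in>U. X - H \<in> L \<and> B \<subseteq> H \<and> A \<inter> H = {}))"

definition iota_axioms :: "'a set \<Rightarrow> ('a set \<Rightarrow> 'a set \<Rightarrow> bool) \<Rightarrow> bool" where
  "iota_axioms X R \<longleftrightarrow>
     \<not> R {} {}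
   \<and> (\<forall>a b a' b'. finite a' \<and> finite b' \<and> a' \<subseteq> X \<and> b' \<subseteq> X \<and> R a b \<and> a \<subseteq> a' \<and> b \<subseteq> b'
        \<longrightarrow> R a' b')
   \<and> (\<forall>p\<in>X. \<forall>q\<in>X. (R {p} {q} \<and> R {q} {p}) \<longleftrightarrow> p = q)
   \<and> (\<forall>a0 b0 a1 b1 p. finite a0 \<and> finite b0 \<and> finite a1 \<and> finite b1
        \<and> a0 \<subseteq> X \<and> b0 \<subseteq> X \<and> a1 \<subseteq> X \<and> b1 \<subseteq> X \<and> p \<in> X
        \<and> R (a0 \<union> {p}) b0 \<and> R a1 (b1 \<union> {p}) \<longrightarrow> R (a0 \<union> a1) (b0 \<union> b1))
   \<and> (\<forall>a b. finite a \<and> finite b \<and> a \<subseteq> X \<and> b \<subseteq> X \<and> R a b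
        \<longrightarrow> (\<exists>p\<in>X. R a {p} \<and> R {p} b))"

definition convL :: "'a set \<Rightarrow> ('a set \<Rightarrow> 'a set \<Rightarrow> bool) \<Rightarrow> 'a set \<Rightarrow> 'a set" where
  "convL X R a = {p \<in> X. R {p} a}"

definition convU :: "'a set \<Rightarrow> ('a set \<Rightarrow> 'a set \<Rightarrow> bool) \<Rightarrow> 'a set \<Rightarrow> 'a set" where
  "convU X R a = {p \<in> X. R a {p}}"

definition famL :: "'a set \<Rightarrow> ('a set \<Rightarrow> 'a set \<Rightarrow> bool) \<Rightarrow> 'a set set" where
  "famL X R = {A. A \<subseteq> X \<and> (\<forall>a. finite a \<and> a \<subseteq> A \<longrightarrow> convL X R a \<subseteq> A)}"

definition famU :: "'a set \<Rightarrow> ('a set \<Rightarrow> 'a set \<Rightarrow> bool) \<Rightarrow> 'a set set" where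
  "famU X R = {A. A \<subseteq> X \<and> (\<forall>a. finite a \<and> a \<subseteq> A \<longrightarrow> convU X R a \<subseteq> A)}"

end

theory Submission
  imports Defs
begin

text \<open>By the cut rule (\<open>\<iota>\<^sub>3\<close>) and interpolation (\<open>\<iota>\<^sub>4\<close>), \<open>a \<sqsubseteq> b\<close> holds iff some point
  lies above \<open>a\<close> and below \<open>b\<close>. The \<open>\<L>\<close>- and \<open>\<U>\<close>-hulls of a point \<open>x\<close> are
  \<open>{p. {p} \<sqsubseteq> {x}}\<close> and \<open>{p. {x} \<sqsubseteq> {p}}\<close>, so (N1) follows from antisymmetry (\<open>\<iota>\<^sub>2\<close>).
  Passing to the converse relation swaps \<open>\<L>\<close> and \<open>\<U>\<close>, which halves the work.

  For (N2), Zorn's lemma extends disjoint \<open>A \<in> \<L>\<close>, \<open>B \<in> \<U>\<close> to a maximal disjoint pair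
  \<open>(A', B')\<close>. If a point \<open>p\<close> lay outside both, maximality would give \<open>b \<in> B'\<close> and
  \<open>a' \<in> A'\<close> with \<open>{b} \<sqsubseteq> a \<union> {p}\<close> and \<open>b\<^sub>0 \<union> {p} \<sqsubseteq> {a'}\<close> for finite \<open>a \<subseteq> A'\<close>,
  \<open>b\<^sub>0 \<subseteq> B'\<close>; cutting \<open>p\<close> gives \<open>b\<^sub>0 \<union> {b} \<sqsubseteq> {a'} \<union> a\<close>, whose interpolant lies in both
  \<open>A'\<close> and \<open>B'\<close>. Hence \<open>X - B' = A'\<close>, and \<open>B'\<close> is the required half-space.\<close>

lemma finite_subset_Union_chainE:
  assumes "finite a" "a \<subseteq> \<Union>F" "F \<noteq> {}" "Complete_Partial_Order.chain (\<subseteq>) F"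
  obtains K where "K \<in> F" "a \<subseteq> K"
  using finite_subset_Union_chain[of a F F] assms by (auto simp: subset_chain_def chain_def)

lemma famL_convL_subset: "A \<in> famL X R \<Longrightarrow> finite a \<Longrightarrow> a \<subseteq> A \<Longrightarrow> convL X R a \<subseteq> A"
  unfolding famL_def by blast

lemma famU_convU_subset: "A \<in> famU X R \<Longrightarrow> finite a \<Longrightarrow> a \<subseteq> A \<Longrightarrow> convU X R a \<subseteq> A"
  unfolding famU_def by blast

lemma convexity_famL: "convexity X (famL X R)"
  unfolding convexity_def
proof (intro conjI allI impI)
  show "famL X R \<subseteq> Pow X" "X \<in> famL X R"
    by (auto simp: famL_def convL_def)
  show "\<Inter>F \<in> famL X R" if "F \<subseteq> famL X R \<and> F \<noteq> {}" for F
    using that unfolding famL_def by blast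
  show "\<Union>F \<in> famL X R"
    if F: "F \<subseteq> famL X R \<and> F \<noteq> {} \<and> Complete_Partial_Order.chain (\<subseteq>) F" for F
    unfolding famL_def
  proof (intro CollectI conjI allI impI)
    show "\<Union>F \<subseteq> X"
      using F by (auto simp: famL_def)
    fix a assume a: "finite a \<and> a \<subseteq> \<Union>F"
    then obtain K where "K \<in> F" "a \<subseteq> K"
      using F finite_subset_Union_chainE by metis
    then show "convL X R a \<subseteq> \<Union>F"
      using F a famL_convL_subset by blast
  qed
qed

lemma famU_eq_famL_converse: "famU X R = famL X (\<lambda>a b. R b a)"
  by (simp add: famU_def famL_def convU_def convL_def)

lemma convU_eq_convL_converse: "convU X R a = convL X (\<lambda>a b. R b a) a"
  by (simp add: convU_def convL_def)

lemma convexity_famU: "convexity X (famU X R)"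
  by (simp add: famU_eq_famL_converse convexity_famL)

lemma convexity_Union_chain:
  assumes "convexity X C" "F \<subseteq> C" "F \<noteq> {}" "Complete_Partial_Order.chain (\<subseteq>) F"
  shows "\<Union>F \<in> C"
  using assms unfolding convexity_def by blast

lemma vimage_Inl_Plus [simp]: "Inl -` (A <+> B) = A"
  by auto

lemma vimage_Inr_Plus [simp]: "Inr -` (A <+> B) = B"
  by auto

lemma Plus_vimage_Inl_Inr: "Inl -` S <+> Inr -` S = S"
proof (rule set_eqI)
  show "x \<in> Inl -` S <+> Inr -` S \<longleftrightarrow> x \<in> S" for x
    by (cases x) auto
qed

lemma maximal_disjoint_extension:
  assumes L: "convexity X L" and U: "convexity X U"
    and A: "A \<in> L" and B: "B \<in> U" and AB: "A \<inter> B = {}"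
  obtains A' B' where "A' \<in> L" "B' \<in> U" "A \<subseteq> A'" "B \<subseteq> B'" "A' \<inter> B' = {}"
    "\<And>A''. A'' \<in> L \<Longrightarrow> A' \<subseteq> A'' \<Longrightarrow> A'' \<inter> B' = {} \<Longrightarrow> A'' = A'"
    "\<And>B''. B'' \<in> U \<Longrightarrow> B' \<subseteq> B'' \<Longrightarrow> A' \<inter> B'' = {} \<Longrightarrow> B'' = B'"
proof -
  \<comment> \<open>Zorn's lemma on the pairs \<open>(A', B')\<close>, encoded as the sets \<open>A' <+> B'\<close>.\<close>
  define P where "P = {S. Inl -` S \<in> L \<and> Inr -` S \<in> U \<and> A \<subseteq> Inl -` S \<and> B \<subseteq> Inr -` S
    \<and> Inl -` S \<inter> Inr -` S = {}}"
  have "\<Union>C \<in> P" if C: "C \<noteq> {}" "subset.chain P C" for C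
  proof -
    have CP: "C \<subseteq> P" and ch: "Complete_Partial_Order.chain (\<subseteq>) C"
      using C by (auto simp: subset_chain_def chain_def)
    have vimage_chain: "Complete_Partial_Order.chain (\<subseteq>) ((\<lambda>S. f -` S) ` C)" for f
      using ch by (rule chain_imageI) (rule vimage_mono)
    have "Inl -` \<Union>C = \<Union>((\<lambda>S. Inl -` S) ` C)" "Inr -` \<Union>C = \<Union>((\<lambda>S. Inr -` S) ` C)"
      by auto
    moreover have "\<Union>((\<lambda>S. Inl -` S) ` C) \<in> L" "\<Union>((\<lambda>S. Inr -` S) ` C) \<in> U"
      using CP C(1) by (auto intro!: convexity_Union_chain[OF L] convexity_Union_chain[OF U]
          vimage_chain simp: P_def)
    moreover have "Inl -` \<Union>C \<inter> Inr -` \<Union>C = {}"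
    proof (rule ccontr)
      assume "Inl -` \<Union>C \<inter> Inr -` \<Union>C \<noteq> {}"
      then obtain x S T where "S \<in> C" "T \<in> C" "Inl x \<in> S" "Inr x \<in> T"
        by auto
      then obtain V where "V \<in> C" "Inl x \<in> V" "Inr x \<in> V"
        using ch by (metis chain_def subsetD)
      then show False
        using CP by (auto simp: P_def)
    qed
    moreover have "A \<subseteq> Inl -` \<Union>C" "B \<subseteq> Inr -` \<Union>C"
      using C(1) CP unfolding P_def by blast+
    ultimately show ?thesis
      unfolding P_def by simp
  qed
  moreover have "A <+> B \<in> P"
    using A B AB by (simp add: P_def)
  ultimately obtain M where M: "M \<in> P" and M_max: "\<And>S. S \<in> P \<Longrightarrow> M \<subseteq> S \<Longrightarrow> S = M"
    using subset_Zorn_nonempty[of P] by blast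
  define A' B' where "A' = Inl -` M" and "B' = Inr -` M"
  have M_eq: "M = A' <+> B'"
    unfolding A'_def B'_def by (rule Plus_vimage_Inl_Inr[symmetric])
  show thesis
  proof
    show A': "A' \<in> L" "A \<subseteq> A'" and B': "B' \<in> U" "B \<subseteq> B'" and "A' \<inter> B' = {}"
      using M unfolding P_def A'_def B'_def by blast+
    show "A'' = A'" if "A'' \<in> L" "A' \<subseteq> A''" "A'' \<inter> B' = {}" for A''
    proof -
      have "A'' <+> B' = M"
        using that A' B' by (intro M_max) (auto simp: P_def M_eq)
      then show ?thesis
        by (metis M_eq vimage_Inl_Plus)
    qed
    show "B'' = B'" if "B'' \<in> U" "B' \<subseteq> B''" "A' \<inter> B'' = {}" for B''
    proof -
      have "A' <+> B'' = M"
        using that A' B' by (intro M_max) (auto simp: P_def M_eq)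
      then show ?thesis
        by (metis M_eq vimage_Inr_Plus)
    qed
  qed
qed

locale iota_relation =
  fixes X :: "'a set" and R :: "'a set \<Rightarrow> 'a set \<Rightarrow> bool"
  assumes iota_axioms: "iota_axioms X R"
begin

lemma R_mono:
  "R a b \<Longrightarrow> a \<subseteq> a' \<Longrightarrow> b \<subseteq> b' \<Longrightarrow> finite a' \<Longrightarrow> finite b' \<Longrightarrow> a' \<subseteq> X \<Longrightarrow> b' \<subseteq> X
    \<Longrightarrow> R a' b'"
  using iota_axioms[unfolded iota_axioms_def, THEN conjunct2, THEN conjunct1] by blast

lemma R_singleton_refl: "p \<in> X \<Longrightarrow> R {p} {p}"
  using iota_axioms[unfolded iota_axioms_def, THEN conjunct2, THEN conjunct2, THEN conjunct1]
  by blast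

lemma R_singleton_antisym: "R {p} {q} \<Longrightarrow> R {q} {p} \<Longrightarrow> p \<in> X \<Longrightarrow> q \<in> X \<Longrightarrow> p = q"
  using iota_axioms[unfolded iota_axioms_def, THEN conjunct2, THEN conjunct2, THEN conjunct1]
  by blast

lemma R_cut:
  "R (a0 \<union> {p}) b0 \<Longrightarrow> R a1 (b1 \<union> {p}) \<Longrightarrow> p \<in> X \<Longrightarrow>
   finite a0 \<Longrightarrow> finite b0 \<Longrightarrow> finite a1 \<Longrightarrow> finite b1 \<Longrightarrow>
   a0 \<subseteq> X \<Longrightarrow> b0 \<subseteq> X \<Longrightarrow> a1 \<subseteq> X \<Longrightarrow> b1 \<subseteq> X \<Longrightarrow> R (a0 \<union> a1) (b0 \<union> b1)"
  using iota_axioms[unfolded iota_axioms_def, THEN conjunct2, THEN conjunct2, THEN conjunct2,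
      THEN conjunct1]
  by blast

lemma R_interpolate:
  "R a b \<Longrightarrow> finite a \<Longrightarrow> finite b \<Longrightarrow> a \<subseteq> X \<Longrightarrow> b \<subseteq> X \<Longrightarrow> \<exists>p\<in>X. R a {p} \<and> R {p} b"
  using iota_axioms[unfolded iota_axioms_def, THEN conjunct2, THEN conjunct2, THEN conjunct2,
      THEN conjunct2]
  by blast

lemma R_trans_singleton:
  "R a {p} \<Longrightarrow> R {p} b \<Longrightarrow> p \<in> X \<Longrightarrow> finite a \<Longrightarrow> finite b \<Longrightarrow> a \<subseteq> X \<Longrightarrow> b \<subseteq> X \<Longrightarrow> R a b"
  using R_cut[of "{}" p b a "{}"] by simp

lemma R_iff_convU_Int_convL:
  assumes "finite a" "finite b" "a \<subseteq> X" "b \<subseteq> X"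
  shows "R a b \<longleftrightarrow> convU X R a \<inter> convL X R b \<noteq> {}"
proof
  assume "R a b"
  then obtain p where "p \<in> X" "R a {p}" "R {p} b"
    using R_interpolate assms by blast
  then show "convU X R a \<inter> convL X R b \<noteq> {}"
    by (auto simp: convU_def convL_def)
next
  assume "convU X R a \<inter> convL X R b \<noteq> {}"
  then show "R a b"
    using R_trans_singleton assms by (auto simp: convU_def convL_def)
qed

lemma iota_axioms_converse: "iota_axioms X (\<lambda>a b. R b a)"
  unfolding iota_axioms_def
proof (intro conjI allI impI ballI)
  show "\<not> R {} {}"
    using iota_axioms by (simp add: iota_axioms_def)
  show "R b' a'" if "finite a' \<and> finite b' \<and> a' \<subseteq> X \<and> b' \<subseteq> X \<and> R b a \<and> a \<subseteq> a' \<and> b \<subseteq> b'"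
    for a b a' b'
    using that R_mono by blast
  show "R {q} {p} \<and> R {p} {q} \<longleftrightarrow> p = q" if "p \<in> X" "q \<in> X" for p q
    using that R_singleton_refl R_singleton_antisym by blast
  show "R (b0 \<union> b1) (a0 \<union> a1)"
    if "finite a0 \<and> finite b0 \<and> finite a1 \<and> finite b1 \<and> a0 \<subseteq> X \<and> b0 \<subseteq> X \<and> a1 \<subseteq> X
      \<and> b1 \<subseteq> X \<and> p \<in> X \<and> R b0 (a0 \<union> {p}) \<and> R (b1 \<union> {p}) a1" for a0 b0 a1 b1 p
    using that R_cut[of b1 p a1 b0 a0] by (simp add: Un_commute)
  show "\<exists>p\<in>X. R {p} a \<and> R b {p}"
    if "finite a \<and> finite b \<and> a \<subseteq> X \<and> b \<subseteq> X \<and> R b a" for a b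
    using that R_interpolate by blast
qed

lemma iota_relation_converse: "iota_relation X (\<lambda>a b. R b a)"
  by (rule iota_relation.intro) (rule iota_axioms_converse)

end

definition convL_hull :: "'a set \<Rightarrow> ('a set \<Rightarrow> 'a set \<Rightarrow> bool) \<Rightarrow> 'a set \<Rightarrow> 'a set" where
  "convL_hull X R S = \<Union>{convL X R a | a. finite a \<and> a \<subseteq> S}"

context iota_relation
begin

lemma subset_convL_hull: "S \<subseteq> X \<Longrightarrow> S \<subseteq> convL_hull X R S"
  unfolding convL_hull_def convL_def using R_singleton_refl by blast

text \<open>The generators \<open>c\<close> taken from the hull can be traded, one at a time via (\<open>\<iota>\<^sub>3\<close>),
  for the finitely many elements of \<open>S\<close> that witness their membership.\<close>
lemma R_convL_hull_generators:
  assumes "finite c" "c \<subseteq> convL_hull X R S" "S \<subseteq> X"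
    and "R {q} (d \<union> c)" "q \<in> X" "finite d" "d \<subseteq> X"
  shows "\<exists>a. finite a \<and> a \<subseteq> S \<and> R {q} (d \<union> a)"
  using assms
proof (induction c arbitrary: d rule: finite_induct)
  case empty
  then show ?case by blast
next
  case (insert x c)
  obtain ax where ax: "finite ax" "ax \<subseteq> S" "R {x} ax" and "x \<in> X"
    using insert.prems(1) by (auto simp: convL_hull_def convL_def)
  have "c \<subseteq> X"
    using insert.prems(1) by (auto simp: convL_hull_def convL_def)
  have "R {q} ((d \<union> c) \<union> {x})"
    using insert.prems(3) by (simp add: Un_ac)
  then have "R {q} ((d \<union> ax) \<union> c)"
    using R_cut[of "{}" x ax "{q}" "d \<union> c"] ax \<open>x \<in> X\<close> \<open>c \<subseteq> X\<close> insert
    by (auto simp: Un_ac)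
  then obtain a where "finite a" "a \<subseteq> S" "R {q} ((d \<union> ax) \<union> a)"
    using insert.IH[of "d \<union> ax"] insert.prems ax by auto
  then show ?case
    using ax by (intro exI[of _ "ax \<union> a"]) (auto simp: Un_ac)
qed

lemma convL_hull_in_famL:
  assumes "S \<subseteq> X"
  shows "convL_hull X R S \<in> famL X R"
  unfolding famL_def
proof (intro CollectI conjI allI impI)
  show "convL_hull X R S \<subseteq> X"
    by (auto simp: convL_hull_def convL_def)
  show "convL X R c \<subseteq> convL_hull X R S" if c: "finite c \<and> c \<subseteq> convL_hull X R S" for c
  proof
    fix q assume "q \<in> convL X R c"
    then have "q \<in> X" "R {q} ({} \<union> c)"
      by (auto simp: convL_def)
    then obtain a where "finite a" "a \<subseteq> S" "R {q} a"
      using R_convL_hull_generators[of c S q "{}"] c assms by auto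
    then show "q \<in> convL_hull X R S"
      using \<open>q \<in> X\<close> by (auto simp: convL_hull_def convL_def)
  qed
qed

lemma convL_hull_singleton:
  assumes "x \<in> X"
  shows "convL_hull X R {x} = convL X R {x}"
proof
  show "convL_hull X R {x} \<subseteq> convL X R {x}"
  proof
    fix q assume "q \<in> convL_hull X R {x}"
    then obtain a where "a \<subseteq> {x}" "q \<in> X" "R {q} a"
      by (auto simp: convL_hull_def convL_def)
    then show "q \<in> convL X R {x}"
      using R_mono[of "{q}" a "{q}" "{x}"] assms by (auto simp: convL_def)
  qed
  show "convL X R {x} \<subseteq> convL_hull X R {x}"
    unfolding convL_hull_def by blast
qed

lemma conv_hull_famL_singleton:
  assumes "x \<in> X"
  shows "conv_hull X (famL X R) {x} = convL X R {x}"
proof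
  have "convL X R {x} \<in> famL X R" "x \<in> convL X R {x}"
    using convL_hull_in_famL[of "{x}"] subset_convL_hull[of "{x}"] convL_hull_singleton assms
    by auto
  then show "conv_hull X (famL X R) {x} \<subseteq> convL X R {x}"
    unfolding conv_hull_def by blast
  show "convL X R {x} \<subseteq> conv_hull X (famL X R) {x}"
    by (auto simp: conv_hull_def famL_def convL_def)
qed

lemma conv_hull_famU_singleton: "x \<in> X \<Longrightarrow> conv_hull X (famU X R) {x} = convU X R {x}"
  using iota_relation.conv_hull_famL_singleton[OF iota_relation_converse]
  by (simp add: famU_eq_famL_converse convU_eq_convL_converse)

lemma conv_hull_singletons_disjoint:
  assumes "x \<in> X" "y \<in> X" "x \<noteq> y"
  shows "conv_hull X (famL X R) {x} \<inter> conv_hull X (famU X R) {y} = {}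
    \<or> conv_hull X (famU X R) {x} \<inter> conv_hull X (famL X R) {y} = {}"
proof -
  have "\<not> (R {y} {x} \<and> R {x} {y})"
    using R_singleton_antisym assms by blast
  then show ?thesis
    using R_iff_convU_Int_convL[of "{y}" "{x}"] R_iff_convU_Int_convL[of "{x}" "{y}"] assms
    by (simp add: conv_hull_famL_singleton conv_hull_famU_singleton Int_commute)
qed

lemma maximal_famL_extension_meets:
  assumes A': "A' \<in> famL X R" and "B' \<subseteq> X" "p \<in> X" "p \<notin> A'"
    and max: "\<And>A''. A'' \<in> famL X R \<Longrightarrow> A' \<subseteq> A'' \<Longrightarrow> A'' \<inter> B' = {} \<Longrightarrow> A'' = A'"
  obtains b a where "b \<in> B'" "finite a" "a \<subseteq> A'" "R {b} (a \<union> {p})"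
proof -
  have A'X: "A' \<subseteq> X"
    using A' by (simp add: famL_def)
  let ?H = "convL_hull X R (insert p A')"
  have "insert p A' \<subseteq> X"
    using A'X assms(3) by blast
  then have H: "?H \<in> famL X R" "insert p A' \<subseteq> ?H"
    by (rule convL_hull_in_famL, rule subset_convL_hull)
  have "?H \<inter> B' \<noteq> {}"
  proof
    assume "?H \<inter> B' = {}"
    moreover have "A' \<subseteq> ?H"
      using H(2) by blast
    ultimately have "?H = A'"
      using max[OF H(1)] by blast
    then show False
      using H(2) assms(4) by blast
  qed
  then obtain b c where b: "b \<in> B'" "finite c" "c \<subseteq> insert p A'" "R {b} c"
    unfolding convL_hull_def convL_def by blast
  have "R {b} ((c - {p}) \<union> {p})"
    by (rule R_mono[OF b(4)]) (use b assms(2,3) A'X in auto)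
  then show thesis
    using that[of b "c - {p}"] b by blast
qed

lemma maximal_disjoint_pair_covers:
  assumes A': "A' \<in> famL X R" and B': "B' \<in> famU X R" and disj: "A' \<inter> B' = {}"
    and maxA: "\<And>A''. A'' \<in> famL X R \<Longrightarrow> A' \<subseteq> A'' \<Longrightarrow> A'' \<inter> B' = {} \<Longrightarrow> A'' = A'"
    and maxB: "\<And>B''. B'' \<in> famU X R \<Longrightarrow> B' \<subseteq> B'' \<Longrightarrow> A' \<inter> B'' = {} \<Longrightarrow> B'' = B'"
  shows "A' \<union> B' = X"
proof (rule ccontr)
  have A'X: "A' \<subseteq> X" and B'X: "B' \<subseteq> X"
    using A' B' by (auto simp: famL_def famU_def)
  assume "A' \<union> B' \<noteq> X"
  then obtain p where p: "p \<in> X" "p \<notin> A'" "p \<notin> B'"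
    using A'X B'X by blast
  obtain b a where b: "b \<in> B'" "finite a" "a \<subseteq> A'" "R {b} (a \<union> {p})"
    using maximal_famL_extension_meets[OF A' B'X p(1,2) maxA] by blast
  obtain a' b0 where a': "a' \<in> A'" "finite b0" "b0 \<subseteq> B'" "R (b0 \<union> {p}) {a'}"
  proof (rule iota_relation.maximal_famL_extension_meets[OF iota_relation_converse])
    show "B' \<in> famL X (\<lambda>a b. R b a)"
      using B' by (simp add: famU_eq_famL_converse)
    show "A' \<subseteq> X" "p \<in> X" "p \<notin> B'"
      using A'X p by auto
    show "A'' = B'" if "A'' \<in> famL X (\<lambda>a b. R b a)" "B' \<subseteq> A''" "A'' \<inter> A' = {}" for A''
      using maxB that by (simp add: famU_eq_famL_converse Int_commute)
  qed (rule that)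
  have fin: "finite (b0 \<union> {b})" "finite ({a'} \<union> a)" and sub: "b0 \<union> {b} \<subseteq> X" "{a'} \<union> a \<subseteq> X"
    using a' b A'X B'X by auto
  have "R (b0 \<union> {b}) ({a'} \<union> a)"
    using R_cut[OF a'(4) b(4) p(1)] a' b A'X B'X by auto
  then obtain q where "q \<in> X" "R (b0 \<union> {b}) {q}" "R {q} ({a'} \<union> a)"
    using R_interpolate[OF _ fin sub] by blast
  moreover have "convU X R (b0 \<union> {b}) \<subseteq> B'" "convL X R ({a'} \<union> a) \<subseteq> A'"
    using famU_convU_subset[OF B' fin(1)] famL_convL_subset[OF A' fin(2)] a' b by auto
  ultimately show False
    using disj by (auto simp: convU_def convL_def)
qed

lemma disjoint_separated_by_halfspace:
  assumes A: "A \<in> famL X R" and B: "B \<in> famU X R" and AB: "A \<inter> B = {}"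
  shows "\<exists>H\<in>famU X R. X - H \<in> famL X R \<and> B \<subseteq> H \<and> A \<inter> H = {}"
proof -
  obtain A' B' where A': "A' \<in> famL X R" and B': "B' \<in> famU X R"
    and "A \<subseteq> A'" "B \<subseteq> B'" and disj: "A' \<inter> B' = {}"
    and maxA: "\<And>A''. A'' \<in> famL X R \<Longrightarrow> A' \<subseteq> A'' \<Longrightarrow> A'' \<inter> B' = {} \<Longrightarrow> A'' = A'"
    and maxB: "\<And>B''. B'' \<in> famU X R \<Longrightarrow> B' \<subseteq> B'' \<Longrightarrow> A' \<inter> B'' = {} \<Longrightarrow> B'' = B'"
    using maximal_disjoint_extension[OF convexity_famL convexity_famU A B AB] by blast
  have "A' \<union> B' = X"
    by (rule maximal_disjoint_pair_covers[OF A' B' disj maxA maxB])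
  then have "X - B' = A'"
    using disj by blast
  then show ?thesis
    using A' B' \<open>A \<subseteq> A'\<close> \<open>B \<subseteq> B'\<close> disj by auto
qed

end

theorem mainTheorem10:
  fixes X :: "'a set" and R :: "'a set \<Rightarrow> 'a set \<Rightarrow> bool"
  assumes "iota_axioms X R"
  shows "normal_biconvexity X (famL X R) (famU X R)
    \<and> (\<forall>a b. finite a \<and> finite b \<and> a \<subseteq> X \<and> b \<subseteq> X \<longrightarrow>
          (R a b \<longleftrightarrow> convU X R a \<inter> convL X R b \<noteq> {}))"
proof -
  interpret iota_relation X R
    by (rule iota_relation.intro) (fact assms)
  have "normal_biconvexity X (famL X R) (famU X R)"
    unfolding normal_biconvexity_def biconvexity_space_def
    by (intro conjI ballI impI convexity_famL convexity_famU conv_hull_singletons_disjoint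
        disjoint_separated_by_halfspace)
  moreover have "R a b \<longleftrightarrow> convU X R a \<inter> convL X R b \<noteq> {}"
    if "finite a \<and> finite b \<and> a \<subseteq> X \<and> b \<subseteq> X" for a b
    using that R_iff_convU_Int_convL by blast
  ultimately show ?thesis
    by blast
qed

end
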